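(* Let $n\ge0$ be an integer, $\omega\in\mathbb{R}$ and $\theta_0\in\mathbb{T}$, with $\theta_j=\theta_0+j\omega$. Suppose that for each $0\le k\le n$, $(\Sigma_k,\theta_0)$ is a reversed $(r_k,l_k,a_k)$-system. Then for every integer $t>0$, $$\frac{|\{0\le j<t:\theta_{-j}\in\bigcup_{k=0}^n\Sigma_k\}|}{t}\le\sum_{k=0}^n\Big(\frac{l_k}{t}+\frac{l_k}{r_k+l_k}\Big)$$ and $$\frac{|\{0\le j<t:\theta_{-j}\in\bigcup_{k=0}^n\Sigma_k\}|}{t}\le\sum_{k=0}^n\frac{l_k}{m_k+l_k},\qquad m_k=\min\{a_k,r_k\}.$$
   Context: Fix $\Sigma\subset\mathbb{T}$ and the orbit $\theta_j=\theta_0+j\omega$, $j\in\mathbb{Z}$. $\Sigma$ has minimal return time $r>0$ if every maximal block of consecutive iterates outside $\Sigma$ lying between two visits to $\Sigma$ has length at least $r$; it has maximal confinement time $l>0$ if every block of consecutive iterates all lying in $\Sigma$ has length at most $l$. $(\Sigma,\theta_0)$ is a reversed $(r,l,a)$-system if $\Sigma$ has minimal return time $r$, maximal confinement time $l$, and reversed accumulation time $a\ge0$, meaning $\theta_{-i}\notin\Sigma$ for all $0\le i<a$. *)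

theory Defs
  imports Complex_Main
begin

text \<open>The circle T = R/Z is represented by [0,1); a point of T is the fractional
part of a real. The orbit is theta_j = theta_0 + j omega (mod 1), j an integer.\<close>

definition orbit :: "real \<Rightarrow> real \<Rightarrow> int \<Rightarrow> real" where
  "orbit \<theta>0 \<omega> j = frac (\<theta>0 + of_int j * \<omega>)"

definition min_return_time :: "real set \<Rightarrow> real \<Rightarrow> real \<Rightarrow> nat \<Rightarrow> bool" where
  "min_return_time \<Sigma> \<theta>0 \<omega> r \<longleftrightarrow>
     (\<forall>i j::int. i + 1 < j \<and> orbit \<theta>0 \<omega> i \<in> \<Sigma> \<and> orbit \<theta>0 \<omega> j \<in> \<Sigma> \<and>
        (\<forall>k. i < k \<and> k < j \<longrightarrow> orbit \<theta>0 \<omega> k \<notin> \<Sigma>) \<longrightarrow> int r \<le> j - i - 1)"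

definition max_confinement_time :: "real set \<Rightarrow> real \<Rightarrow> real \<Rightarrow> nat \<Rightarrow> bool" where
  "max_confinement_time \<Sigma> \<theta>0 \<omega> l \<longleftrightarrow>
     (\<forall>(i::int) (m::nat). (\<forall>k. i \<le> k \<and> k < i + int m \<longrightarrow> orbit \<theta>0 \<omega> k \<in> \<Sigma>) \<longrightarrow> m \<le> l)"

definition reversed_system :: "real set \<Rightarrow> real \<Rightarrow> real \<Rightarrow> nat \<Rightarrow> nat \<Rightarrow> nat \<Rightarrow> bool" where
  "reversed_system \<Sigma> \<theta>0 \<omega> r l a \<longleftrightarrow>
     0 < r \<and> 0 < l \<and> min_return_time \<Sigma> \<theta>0 \<omega> r \<and> max_confinement_time \<Sigma> \<theta>0 \<omega> l \<and>
     (\<forall>i::nat. i < a \<longrightarrow> orbit \<theta>0 \<omega> (- int i) \<notin> \<Sigma>)"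

end

theory Submission
  imports Defs
begin

text \<open>Read the backward orbit \<open>\<theta>\<^sub>0, \<theta>\<^sub>-\<^sub>1, \<theta>\<^sub>-\<^sub>2, \<dots>\<close> as a 0/1 sequence recording visits
  to \<open>\<Sigma>\<close>. Its blocks of visits have length \<open>q \<le> l\<close>, and every block but the first is
  preceded by a gap of length \<open>d \<ge> r\<close>, so \<open>q (m + l) \<le> (d + q) l\<close> whenever \<open>m \<le> r\<close>;
  the first block is preceded by at least \<open>a\<close> non-visits, or is paid for by an additive
  error \<open>r l\<close>. Summing over the blocks up to time \<open>t\<close> bounds the number of visits, and a
  union bound handles finitely many sets.\<close>

definition visits :: "(nat \<Rightarrow> bool) \<Rightarrow> nat \<Rightarrow> nat" where
  "visits P t = card {j \<in> {0..<t}. P j}"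

lemma visits_0 [simp]: "visits P 0 = 0"
  by (simp add: visits_def)

lemma visits_Suc [simp]: "visits P (Suc t) = visits P t + (if P t then 1 else 0)"
proof -
  have "{j \<in> {0..<Suc t}. P j} = {j \<in> {0..<t}. P j} \<union> (if P t then {t} else {})"
    by (auto simp: less_Suc_eq)
  then show ?thesis
    by (auto simp: visits_def card_insert_if)
qed

lemma visits_add_all:
  "(\<And>k. s \<le> k \<Longrightarrow> k < s + q \<Longrightarrow> P k) \<Longrightarrow> visits P (s + q) = visits P s + q"
  by (induction q) auto

lemma visits_add_none:
  "(\<And>k. s \<le> k \<Longrightarrow> k < s + q \<Longrightarrow> \<not> P k) \<Longrightarrow> visits P (s + q) = visits P s"
  by (induction q) auto

lemma final_run_start:
  fixes t :: nat
  shows "\<exists>s \<le> t. (\<forall>k. s \<le> k \<and> k < t \<longrightarrow> P k) \<and> (s = 0 \<or> \<not> P (s - 1))"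
proof (induction t)
  case (Suc t)
  then obtain s where s: "s \<le> t" "\<forall>k. s \<le> k \<and> k < t \<longrightarrow> P k" "s = 0 \<or> \<not> P (s - 1)"
    by blast
  show ?case
  proof (cases "P t")
    case True
    with s show ?thesis by (intro exI[of _ s]) (auto simp: less_Suc_eq)
  qed (intro exI[of _ "Suc t"], auto)
qed simp

lemma none_or_last_before:
  fixes u :: nat
  shows "(\<forall>k < u. \<not> P k) \<or> (\<exists>p < u. P p \<and> (\<forall>k. p < k \<and> k < u \<longrightarrow> \<not> P k))"
proof (induction u)
  case (Suc u)
  then show ?case
    by (cases "P u") (auto simp: less_Suc_eq)
qed simp

text \<open>\<open>E\<close> is the additive error allowed for the first block; the two bounds of the theorem
  are the instances \<open>(m, E) = (r, r l)\<close> and \<open>(m, E) = (min a r, 0)\<close>.\<close>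

lemma visits_weighted_bound:
  fixes P :: "nat \<Rightarrow> bool"
  assumes confined: "\<And>i q. (\<And>k. i \<le> k \<Longrightarrow> k < i + q \<Longrightarrow> P k) \<Longrightarrow> q \<le> l"
    and returns: "\<And>i j. i + 1 < j \<Longrightarrow> P i \<Longrightarrow> P j \<Longrightarrow> (\<And>k. i < k \<Longrightarrow> k < j \<Longrightarrow> \<not> P k)
                    \<Longrightarrow> r \<le> j - i - 1"
    and "m \<le> r"
    and first: "\<And>s. P s \<Longrightarrow> (\<And>i. i < s \<Longrightarrow> \<not> P i) \<Longrightarrow> m * l \<le> s * l + E"
  shows "visits P t * (m + l) \<le> t * l + E"
proof (induction t rule: less_induct)
  case (less t)
  obtain s where s: "s \<le> t" "\<And>k. s \<le> k \<Longrightarrow> k < t \<Longrightarrow> P k" "s = 0 \<or> \<not> P (s - 1)"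
    using final_run_start[of t P] by blast
  show ?case
  proof (cases "s = t")
    case True
    then show ?thesis
    proof (cases t)
      case (Suc t')
      with True s(3) have "visits P t = visits P t'" by simp
      with less.IH[of t'] Suc show ?thesis by (simp add: add_mono)
    qed simp
  next
    case False
    define q where "q = t - s"
    have t_eq: "t = s + q" and "P s"
      using s False by (auto simp: q_def)
    have visits_t: "visits P t = visits P s + q"
      unfolding t_eq by (rule visits_add_all) (use s(2) t_eq in auto)
    have "q \<le> l"
      by (rule confined[of s q]) (use s(2) t_eq in auto)
    then have qm: "q * m \<le> l * m" by (rule mult_le_mono1)
    from none_or_last_before[of s P] show ?thesis
    proof
      assume "\<forall>k < s. \<not> P k"
      then have "visits P s = 0" and "m * l \<le> s * l + E"
        using visits_add_none[of 0 s P] first[OF \<open>P s\<close>] by auto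
      moreover have "visits P t * (m + l) = q * m + q * l" and "t * l = s * l + q * l"
        using visits_t \<open>visits P s = 0\<close> by (simp_all add: t_eq algebra_simps)
      ultimately show ?thesis
        using qm mult.commute[of l m] by linarith
    next
      assume "\<exists>p < s. P p \<and> (\<forall>k. p < k \<and> k < s \<longrightarrow> \<not> P k)"
      then obtain p where p: "p < s" "P p" "\<forall>k. p < k \<and> k < s \<longrightarrow> \<not> P k" by blast
      with s(3) have "p + 1 < s" by (cases "p = s - 1") auto
      define d where "d = s - p - 1"
      have s_eq: "s = (p + 1) + d"
        using \<open>p + 1 < s\<close> by (simp add: d_def)
      have "r \<le> d"
        unfolding d_def by (rule returns[OF \<open>p + 1 < s\<close> p(2) \<open>P s\<close>]) (use p in auto)
      with qm \<open>m \<le> r\<close> have gap: "q * m \<le> d * l"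
        by (metis le_trans mult.commute mult_le_mono2)
      have "visits P s = visits P (p + 1)"
        unfolding s_eq by (rule visits_add_none) (use p s_eq in auto)
      moreover have "visits P (p + 1) * (m + l) \<le> (p + 1) * l + E"
        using \<open>p + 1 < s\<close> t_eq by (intro less.IH) simp
      ultimately show ?thesis
        using visits_t gap by (simp add: t_eq s_eq algebra_simps)
    qed
  qed
qed

lemma backward_confinement:
  assumes "max_confinement_time \<Sigma> \<theta>0 \<omega> l"
    and "\<And>k. i \<le> k \<Longrightarrow> k < i + q \<Longrightarrow> orbit \<theta>0 \<omega> (- int k) \<in> \<Sigma>"
  shows "q \<le> l"
proof -
  have "orbit \<theta>0 \<omega> k \<in> \<Sigma>" if "1 - int (i + q) \<le> k" "k < 1 - int (i + q) + int q" for k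
    using assms(2)[of "nat (- k)"] that by simp
  with assms(1) show ?thesis
    unfolding max_confinement_time_def by blast
qed

lemma backward_return:
  assumes "min_return_time \<Sigma> \<theta>0 \<omega> r" and "i + 1 < j"
    and "orbit \<theta>0 \<omega> (- int i) \<in> \<Sigma>" "orbit \<theta>0 \<omega> (- int j) \<in> \<Sigma>"
    and "\<And>k. i < k \<Longrightarrow> k < j \<Longrightarrow> orbit \<theta>0 \<omega> (- int k) \<notin> \<Sigma>"
  shows "r \<le> j - i - 1"
proof -
  have "orbit \<theta>0 \<omega> k \<notin> \<Sigma>" if "- int j < k" "k < - int i" for k
    using assms(5)[of "nat (- k)"] that by simp
  moreover have "- int j + 1 < - int i"
    using assms(2) by simp
  ultimately have "int r \<le> - int i - - int j - 1"
    using assms(1,3,4) unfolding min_return_time_def by blast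
  then show ?thesis by simp
qed

lemma reversed_system_visits_bounds:
  fixes t :: nat
  assumes "reversed_system \<Sigma> \<theta>0 \<omega> r l a"
  defines "c \<equiv> visits (\<lambda>j. orbit \<theta>0 \<omega> (- int j) \<in> \<Sigma>) t"
  shows "c * (r + l) \<le> t * l + r * l" and "c * (min a r + l) \<le> t * l"
proof -
  have mrt: "min_return_time \<Sigma> \<theta>0 \<omega> r" and mct: "max_confinement_time \<Sigma> \<theta>0 \<omega> l"
    and accumulation: "\<And>i. i < a \<Longrightarrow> orbit \<theta>0 \<omega> (- int i) \<notin> \<Sigma>"
    using assms(1) unfolding reversed_system_def by auto
  note bound = visits_weighted_bound[where P = "\<lambda>j. orbit \<theta>0 \<omega> (- int j) \<in> \<Sigma>" and l = l and r = r and t = t,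
      OF backward_confinement[OF mct] backward_return[OF mrt], folded c_def]
  show "c * (r + l) \<le> t * l + r * l"
    by (rule bound) auto
  have "c * (min a r + l) \<le> t * l + 0"
  proof (rule bound)
    fix s assume "orbit \<theta>0 \<omega> (- int s) \<in> \<Sigma>"
    with accumulation have "a \<le> s" by (meson not_le)
    then show "min a r * l \<le> s * l + 0"
      by (simp add: mult_le_mono1 min.coboundedI1)
  qed auto
  then show "c * (min a r + l) \<le> t * l" by simp
qed

lemma reversed_system_visit_frequency:
  fixes t :: nat
  assumes sys: "reversed_system \<Sigma> \<theta>0 \<omega> r l a" and "0 < t"
  defines "c \<equiv> card {j \<in> {0..<t}. orbit \<theta>0 \<omega> (- int j) \<in> \<Sigma>}"
  shows "real c / real t \<le> real l / real t + real l / (real r + real l)"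
    and "real c / real t \<le> real l / (real (min a r) + real l)"
proof -
  have c_visits: "c = visits (\<lambda>j. orbit \<theta>0 \<omega> (- int j) \<in> \<Sigma>) t"
    by (simp add: c_def visits_def)
  have "0 < l" using sys by (simp add: reversed_system_def)
  then have rl: "0 < real r + real l" and ml: "0 < real (min a r) + real l" by auto
  have "real c * (real r + real l) \<le> real t * real l + real r * real l"
    using reversed_system_visits_bounds(1)[OF sys, of t, folded c_visits] by (simp flip: of_nat_mult of_nat_add)
  then have "real c \<le> (real t * real l + real r * real l) / (real r + real l)"
    using rl by (simp add: pos_le_divide_eq)
  also have "\<dots> = real t * (real l / (real r + real l)) + real l * (real r / (real r + real l))"
    by (simp add: add_divide_distrib mult.commute)
  also have "\<dots> \<le> real t * (real l / (real r + real l)) + real l"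
    using rl by (intro add_left_mono mult_left_le) auto
  finally show "real c / real t \<le> real l / real t + real l / (real r + real l)"
    using \<open>0 < t\<close> by (simp add: divide_le_eq add_divide_distrib algebra_simps)
  have "real c * (real (min a r) + real l) \<le> real t * real l"
    using reversed_system_visits_bounds(2)[OF sys, of t, folded c_visits] by (simp flip: of_nat_mult of_nat_add)
  then show "real c / real t \<le> real l / (real (min a r) + real l)"
    using ml \<open>0 < t\<close> by (simp add: divide_le_eq le_divide_eq field_simps)
qed

theorem lemmaB2:
  fixes n :: nat and \<omega> \<theta>0 :: real and \<Sigma> :: "nat \<Rightarrow> real set"
    and r l a :: "nat \<Rightarrow> nat" and t :: nat
  assumes sys: "\<And>k. k \<le> n \<Longrightarrow> reversed_system (\<Sigma> k) \<theta>0 \<omega> (r k) (l k) (a k)"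
    and t: "0 < t"
  shows "real (card {j \<in> {0..<t}. orbit \<theta>0 \<omega> (- int j) \<in> (\<Union>k\<le>n. \<Sigma> k)}) / real t
           \<le> (\<Sum>k\<le>n. real (l k) / real t + real (l k) / (real (r k) + real (l k)))
         \<and> real (card {j \<in> {0..<t}. orbit \<theta>0 \<omega> (- int j) \<in> (\<Union>k\<le>n. \<Sigma> k)}) / real t
           \<le> (\<Sum>k\<le>n. real (l k) / (real (min (a k) (r k)) + real (l k)))"
proof -
  define C where "C k = card {j \<in> {0..<t}. orbit \<theta>0 \<omega> (- int j) \<in> \<Sigma> k}" for k
  have "{j \<in> {0..<t}. orbit \<theta>0 \<omega> (- int j) \<in> (\<Union>k\<le>n. \<Sigma> k)}
       = (\<Union>k\<le>n. {j \<in> {0..<t}. orbit \<theta>0 \<omega> (- int j) \<in> \<Sigma> k})" by auto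
  then have "card {j \<in> {0..<t}. orbit \<theta>0 \<omega> (- int j) \<in> (\<Union>k\<le>n. \<Sigma> k)} \<le> (\<Sum>k\<le>n. C k)"
    unfolding C_def by (simp add: card_UN_le)
  then have union_bound: "real (card {j \<in> {0..<t}. orbit \<theta>0 \<omega> (- int j) \<in> (\<Union>k\<le>n. \<Sigma> k)}) / real t
        \<le> (\<Sum>k\<le>n. real (C k) / real t)"
    using t by (simp add: divide_right_mono flip: sum_divide_distrib of_nat_sum)
  have "(\<Sum>k\<le>n. real (C k) / real t)
      \<le> (\<Sum>k\<le>n. real (l k) / real t + real (l k) / (real (r k) + real (l k)))"
    and "(\<Sum>k\<le>n. real (C k) / real t) \<le> (\<Sum>k\<le>n. real (l k) / (real (min (a k) (r k)) + real (l k)))"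
    using reversed_system_visit_frequency[OF sys t] by (auto simp: C_def intro: sum_mono)
  with union_bound show ?thesis by linarith
qed

end
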